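(* The real vector space with basis $J,H,G_a,P_a,J_a,H_a,G_{ab},P_{ab},J^*,H^*,J^*_a,H^*_a$ with the following nonzero brackets is a Lie algebra (the double extension of $\operatorname{span}\{P_a,G_a,P_{ab},G_{ab}\}$ by $\operatorname{span}\{H,J,H_a,J_a\}$): $[J,G_a]=\epsilon_{am}G_m$, $[J,P_a]=\epsilon_{am}P_m$, $[G_a,H]=-\epsilon_{am}P_m$, $[G_a,G_b]=\epsilon_{ab}H^*$, $[P_a,G_b]=\epsilon_{ab}J^*$; $[J,J_a]=\epsilon_{am}J_m$, $[J,G_{ab}]=-\epsilon_{m(a}G_{b)m}$, $[J,H_a]=\epsilon_{am}H_m$, $[J,P_{ab}]=-\epsilon_{m(a}P_{b)m}$, $[G_a,J_b]=-(\epsilon_{am}G_{bm}+\epsilon_{ab}G_{mm})$, $[G_a,H_b]=-(\epsilon_{am}P_{bm}+\epsilon_{ab}P_{mm})$, $[H,J_a]=\epsilon_{am}H_m$, $[H,G_{ab}]=-\epsilon_{m(a}P_{b)m}$, $[P_a,J_b]=-(\epsilon_{am}P_{bm}+\epsilon_{ab}P_{mm})$; $[J_a,J_b]=\epsilon_{ab}J$, $[J_a,G_{bc}]=\delta_{a(b}\epsilon_{c)m}G_m$, $[J_a,H_b]=\epsilon_{ab}H$, $[J_a,P_{bc}]=\delta_{a(b}\epsilon_{c)m}P_m$, $[G_{ab},H_c]=-\delta_{c(a}\epsilon_{b)m}P_m$; $[G_{ab},G_{cd}]=\epsilon_{(a(c}\delta_{d)b)}H^*$, $[P_{ab},G_{cd}]=\epsilon_{(a(c}\delta_{d)b)}J^*$,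 $[P_a,G_{bc}]=\epsilon_{a(b}J^*_{c)}$, $[G_a,G_{bc}]=\epsilon_{a(b}H^*_{c)}$, $[G_a,P_{bc}]=\epsilon_{a(b}J^*_{c)}$; $[J,H^*_a]=\epsilon_{am}H^*_m$, $[J,J^*_a]=\epsilon_{am}J^*_m$, $[H,H^*_a]=\epsilon_{am}J^*_m$, $[J_a,J^*]=-\epsilon_{am}J^*_m$, $[J_a,H^*]=-\epsilon_{am}H^*_m$, $[J_a,J^*_b]=\epsilon_{ab}J^*$, $[J_a,H^*_b]=\epsilon_{ab}H^*$, $[H_a,H^*]=-\epsilon_{am}J^*_m$, $[H_a,H^*_b]=\epsilon_{ab}J^*$. It admits the invariant metric with nonzero entries $\langle P_a,G_b\rangle=\delta_{ab}$, $\langle P_{ab},G_{cd}\rangle=\delta_{a(c}\delta_{d)b}-\tfrac23\delta_{ab}\delta_{cd}$, $\langle H,H^*\rangle=1$, $\langle J,J^*\rangle=1$, $\langle H_a,H^*_b\rangle=\delta_{ab}$, $\langle J_a,J^*_b\rangle=\delta_{ab}$. The subspace $\operatorname{span}\{H,J,P_a,G_a,H^*,J^*\}$ is a subalgebra isomorphic to the Extended Bargmann algebra.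
   Context: Indices $a,b,c,d,m\in\{1,2\}$, summed when repeated, $\epsilon_{12}=1$; $G_{ab},P_{ab}$ symmetric. Symmetrization without normalization ($T_{(ab)}=T_{ab}+T_{ba}$, nested from outermost to innermost). An invariant metric is a symmetric nondegenerate bilinear form with $\langle[Z,X],Y\rangle+\langle X,[Z,Y]\rangle=0$. The Extended Bargmann algebra has basis $J,H,G_a,P_a,J^*,H^*$ and nonzero brackets $[J,G_a]=\epsilon_{am}G_m$, $[J,P_a]=\epsilon_{am}P_m$, $[G_a,G_b]=\epsilon_{ab}H^*$, $[G_a,H]=-\epsilon_{am}P_m$, $[G_a,P_b]=\epsilon_{ab}J^*$. *)

theory Defs
  imports "HOL-Analysis.Analysis"
begin

datatype idx = I1 | I2

lemma UNIV_idx: "(UNIV :: idx set) = {I1, I2}"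
  by (auto intro: idx.exhaust)

instance idx :: finite
  by standard (simp add: UNIV_idx)

fun eps :: "idx \<Rightarrow> idx \<Rightarrow> real" where
  "eps I1 I2 = 1"
| "eps I2 I1 = -1"
| "eps _ _ = 0"

definition dl :: "idx \<Rightarrow> idx \<Rightarrow> real" where
  "dl a b = (if a = b then 1 else 0)"

text \<open>Unordered pairs of indices, labelling the independent components of the
  symmetric generators G_ab = G_ba and P_ab = P_ba.\<close>

datatype sym = S11 | S12 | S22

fun spair :: "idx \<Rightarrow> idx \<Rightarrow> sym" where
  "spair I1 I1 = S11"
| "spair I2 I2 = S22"
| "spair _ _ = S12"

fun sfst :: "sym \<Rightarrow> idx" where
  "sfst S11 = I1" | "sfst S12 = I1" | "sfst S22 = I2"

fun ssnd :: "sym \<Rightarrow> idx" where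
  "ssnd S11 = I1" | "ssnd S12 = I2" | "ssnd S22 = I2"

lemma UNIV_sym: "(UNIV :: sym set) = {S11, S12, S22}"
  by (auto intro: sym.exhaust)

instance sym :: finite
  by standard (simp add: UNIV_sym)

text \<open>Basis: J, H, G_a, P_a, J_a, H_a, G_ab, P_ab, J^*, H^*, J^*_a, H^*_a.\<close>

datatype bas = bJ | bH | bG idx | bP idx | bJa idx | bHa idx | bGs sym | bPs sym
  | bJs | bHs | bJsa idx | bHsa idx

lemma UNIV_bas: "(UNIV :: bas set) =
  {bJ, bH, bJs, bHs} \<union> range bG \<union> range bP \<union> range bJa \<union> range bHa
  \<union> range bGs \<union> range bPs \<union> range bJsa \<union> range bHsa"
  by (auto intro: bas.exhaust)

instance bas :: finite
  by standard (simp add: UNIV_bas)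

type_synonym V = "real ^ bas"

definition ev :: "bas \<Rightarrow> V" where "ev k = axis k 1"

abbreviation "vJ \<equiv> ev bJ"
abbreviation "vH \<equiv> ev bH"
abbreviation "vG a \<equiv> ev (bG a)"
abbreviation "vP a \<equiv> ev (bP a)"
abbreviation "vJa a \<equiv> ev (bJa a)"
abbreviation "vHa a \<equiv> ev (bHa a)"
abbreviation "vGs a b \<equiv> ev (bGs (spair a b))"
abbreviation "vPs a b \<equiv> ev (bPs (spair a b))"
abbreviation "vJs \<equiv> ev bJs"
abbreviation "vHs \<equiv> ev bHs"
abbreviation "vJsa a \<equiv> ev (bJsa a)"
abbreviation "vHsa a \<equiv> ev (bHsa a)"

text \<open>Nested unnormalised symmetrisation
  eps_((a(c) delta_d)b) = eps_ac delta_db + eps_ad delta_cb + eps_bc delta_da + eps_bd delta_ca.\<close>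
definition Tsym :: "idx \<Rightarrow> idx \<Rightarrow> idx \<Rightarrow> idx \<Rightarrow> real" where
  "Tsym a b c d = eps a c * dl d b + eps a d * dl c b + eps b c * dl d a + eps b d * dl c a"

text \<open>For G_ab, P_ab the representative indices (sfst s, ssnd s) of the
  unordered pair s are used; all formulas are symmetric in the pair, so this choice is
  immaterial.\<close>

fun tabJ :: "bas \<Rightarrow> V option" where
  "tabJ (bG a) = Some (\<Sum>m\<in>UNIV. eps a m *\<^sub>R vG m)"
| "tabJ (bP a) = Some (\<Sum>m\<in>UNIV. eps a m *\<^sub>R vP m)"
| "tabJ (bJa a) = Some (\<Sum>m\<in>UNIV. eps a m *\<^sub>R vJa m)"
| "tabJ (bGs s) = Some (- (\<Sum>m\<in>UNIV. eps m (sfst s) *\<^sub>R vGs (ssnd s) m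
                                     + eps m (ssnd s) *\<^sub>R vGs (sfst s) m))"
| "tabJ (bHa a) = Some (\<Sum>m\<in>UNIV. eps a m *\<^sub>R vHa m)"
| "tabJ (bPs s) = Some (- (\<Sum>m\<in>UNIV. eps m (sfst s) *\<^sub>R vPs (ssnd s) m
                                     + eps m (ssnd s) *\<^sub>R vPs (sfst s) m))"
| "tabJ (bHsa a) = Some (\<Sum>m\<in>UNIV. eps a m *\<^sub>R vHsa m)"
| "tabJ (bJsa a) = Some (\<Sum>m\<in>UNIV. eps a m *\<^sub>R vJsa m)"
| "tabJ _ = None"

fun tabH :: "bas \<Rightarrow> V option" where
  "tabH (bJa a) = Some (\<Sum>m\<in>UNIV. eps a m *\<^sub>R vHa m)"
| "tabH (bGs s) = Some (- (\<Sum>m\<in>UNIV. eps m (sfst s) *\<^sub>R vPs (ssnd s) m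
                                     + eps m (ssnd s) *\<^sub>R vPs (sfst s) m))"
| "tabH (bHsa a) = Some (\<Sum>m\<in>UNIV. eps a m *\<^sub>R vJsa m)"
| "tabH _ = None"

fun tabG :: "idx \<Rightarrow> bas \<Rightarrow> V option" where
  "tabG a bH = Some (- (\<Sum>m\<in>UNIV. eps a m *\<^sub>R vP m))"
| "tabG a (bG b) = Some (eps a b *\<^sub>R vHs)"
| "tabG a (bJa b) = Some (- (\<Sum>m\<in>UNIV. eps a m *\<^sub>R vGs b m + eps a b *\<^sub>R vGs m m))"
| "tabG a (bHa b) = Some (- (\<Sum>m\<in>UNIV. eps a m *\<^sub>R vPs b m + eps a b *\<^sub>R vPs m m))"
| "tabG a (bGs s) = Some (eps a (sfst s) *\<^sub>R vHsa (ssnd s) + eps a (ssnd s) *\<^sub>R vHsa (sfst s))"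
| "tabG a (bPs s) = Some (eps a (sfst s) *\<^sub>R vJsa (ssnd s) + eps a (ssnd s) *\<^sub>R vJsa (sfst s))"
| "tabG a _ = None"

fun tabP :: "idx \<Rightarrow> bas \<Rightarrow> V option" where
  "tabP a (bG b) = Some (eps a b *\<^sub>R vJs)"
| "tabP a (bJa b) = Some (- (\<Sum>m\<in>UNIV. eps a m *\<^sub>R vPs b m + eps a b *\<^sub>R vPs m m))"
| "tabP a (bGs s) = Some (eps a (sfst s) *\<^sub>R vJsa (ssnd s) + eps a (ssnd s) *\<^sub>R vJsa (sfst s))"
| "tabP a _ = None"

fun tabJa :: "idx \<Rightarrow> bas \<Rightarrow> V option" where
  "tabJa a (bJa b) = Some (eps a b *\<^sub>R vJ)"
| "tabJa a (bGs s) = Some (\<Sum>m\<in>UNIV. (dl a (sfst s) * eps (ssnd s) m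
                                          + dl a (ssnd s) * eps (sfst s) m) *\<^sub>R vG m)"
| "tabJa a (bHa b) = Some (eps a b *\<^sub>R vH)"
| "tabJa a (bPs s) = Some (\<Sum>m\<in>UNIV. (dl a (sfst s) * eps (ssnd s) m
                                          + dl a (ssnd s) * eps (sfst s) m) *\<^sub>R vP m)"
| "tabJa a bJs = Some (- (\<Sum>m\<in>UNIV. eps a m *\<^sub>R vJsa m))"
| "tabJa a bHs = Some (- (\<Sum>m\<in>UNIV. eps a m *\<^sub>R vHsa m))"
| "tabJa a (bJsa b) = Some (eps a b *\<^sub>R vJs)"
| "tabJa a (bHsa b) = Some (eps a b *\<^sub>R vHs)"
| "tabJa a _ = None"

fun tabHa :: "idx \<Rightarrow> bas \<Rightarrow> V option" where
  "tabHa a bHs = Some (- (\<Sum>m\<in>UNIV. eps a m *\<^sub>R vJsa m))"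
| "tabHa a (bHsa b) = Some (eps a b *\<^sub>R vJs)"
| "tabHa a _ = None"

fun tabGs :: "sym \<Rightarrow> bas \<Rightarrow> V option" where
  "tabGs s (bHa c) = Some (- (\<Sum>m\<in>UNIV. (dl c (sfst s) * eps (ssnd s) m
                                          + dl c (ssnd s) * eps (sfst s) m) *\<^sub>R vP m))"
| "tabGs s (bGs t) = Some (Tsym (sfst s) (ssnd s) (sfst t) (ssnd t) *\<^sub>R vHs)"
| "tabGs s _ = None"

fun tabPs :: "sym \<Rightarrow> bas \<Rightarrow> V option" where
  "tabPs s (bGs t) = Some (Tsym (sfst s) (ssnd s) (sfst t) (ssnd t) *\<^sub>R vJs)"
| "tabPs s _ = None"

text \<open>The table of listed brackets [X,Y] (in the orientation listed in the
  statement): Some value for listed ordered pairs, None otherwise.\<close>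
fun tab :: "bas \<Rightarrow> bas \<Rightarrow> V option" where
  "tab bJ j = tabJ j"
| "tab bH j = tabH j"
| "tab (bG a) j = tabG a j"
| "tab (bP a) j = tabP a j"
| "tab (bJa a) j = tabJa a j"
| "tab (bHa a) j = tabHa a j"
| "tab (bGs s) j = tabGs s j"
| "tab (bPs s) j = tabPs s j"
| "tab _ _ = None"

definition bb :: "bas \<Rightarrow> bas \<Rightarrow> V" where
  "bb i j = (case tab i j of Some v \<Rightarrow> v
             | None \<Rightarrow> (case tab j i of Some v \<Rightarrow> - v | None \<Rightarrow> 0))"

definition br :: "V \<Rightarrow> V \<Rightarrow> V" where
  "br x y = (\<Sum>i\<in>UNIV. \<Sum>j\<in>UNIV. (x $ i * y $ j) *\<^sub>R bb i j)"

definition gt :: "bas \<Rightarrow> bas \<Rightarrow> real" where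
  "gt i j = (case (i, j) of
      (bP a, bG b) \<Rightarrow> dl a b
    | (bPs s, bGs t) \<Rightarrow> dl (sfst s) (sfst t) * dl (ssnd t) (ssnd s)
                      + dl (sfst s) (ssnd t) * dl (sfst t) (ssnd s)
                      - 2/3 * dl (sfst s) (ssnd s) * dl (sfst t) (ssnd t)
    | (bH, bHs) \<Rightarrow> 1
    | (bJ, bJs) \<Rightarrow> 1
    | (bHa a, bHsa b) \<Rightarrow> dl a b
    | (bJa a, bJsa b) \<Rightarrow> dl a b
    | _ \<Rightarrow> 0)"

definition gm :: "bas \<Rightarrow> bas \<Rightarrow> real" where
  "gm i j = gt i j + gt j i"

definition met :: "V \<Rightarrow> V \<Rightarrow> real" where
  "met x y = (\<Sum>i\<in>UNIV. \<Sum>j\<in>UNIV. x $ i * y $ j * gm i j)"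

datatype ebas = eJ | eH | eG idx | eP idx | eJs | eHs

lemma UNIV_ebas: "(UNIV :: ebas set) = {eJ, eH, eJs, eHs} \<union> range eG \<union> range eP"
  by (auto intro: ebas.exhaust)

instance ebas :: finite
  by standard (simp add: UNIV_ebas)

type_synonym EB = "real ^ ebas"

definition eev :: "ebas \<Rightarrow> EB" where "eev k = axis k 1"

fun etab :: "ebas \<Rightarrow> ebas \<Rightarrow> EB option" where
  "etab eJ (eG a) = Some (\<Sum>m\<in>UNIV. eps a m *\<^sub>R eev (eG m))"
| "etab eJ (eP a) = Some (\<Sum>m\<in>UNIV. eps a m *\<^sub>R eev (eP m))"
| "etab (eG a) (eG b) = Some (eps a b *\<^sub>R eev eHs)"
| "etab (eG a) eH = Some (- (\<Sum>m\<in>UNIV. eps a m *\<^sub>R eev (eP m)))"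
| "etab (eG a) (eP b) = Some (eps a b *\<^sub>R eev eJs)"
| "etab _ _ = None"

definition ebb :: "ebas \<Rightarrow> ebas \<Rightarrow> EB" where
  "ebb i j = (case etab i j of Some v \<Rightarrow> v
              | None \<Rightarrow> (case etab j i of Some v \<Rightarrow> - v | None \<Rightarrow> 0))"

definition ebr :: "EB \<Rightarrow> EB \<Rightarrow> EB" where
  "ebr x y = (\<Sum>i\<in>UNIV. \<Sum>j\<in>UNIV. (x $ i * y $ j) *\<^sub>R ebb i j)"

definition lie_algebra :: "('v::real_vector \<Rightarrow> 'v \<Rightarrow> 'v) \<Rightarrow> bool" where
  "lie_algebra b \<longleftrightarrow> bilinear b \<and> (\<forall>x. b x x = 0)
     \<and> (\<forall>x y z. b x (b y z) + b y (b z x) + b z (b x y) = 0)"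

definition invariant_metric :: "('v::real_vector \<Rightarrow> 'v \<Rightarrow> 'v) \<Rightarrow> ('v \<Rightarrow> 'v \<Rightarrow> real) \<Rightarrow> bool" where
  "invariant_metric b B \<longleftrightarrow> bilinear B \<and> (\<forall>x y. B x y = B y x)
     \<and> (\<forall>x. (\<forall>y. B x y = 0) \<longrightarrow> x = 0)
     \<and> (\<forall>x y z. B (b z x) y + B x (b z y) = 0)"

definition lie_subalgebra :: "('v::real_vector \<Rightarrow> 'v \<Rightarrow> 'v) \<Rightarrow> 'v set \<Rightarrow> bool" where
  "lie_subalgebra b S \<longleftrightarrow> subspace S \<and> (\<forall>x\<in>S. \<forall>y\<in>S. b x y \<in> S)"

definition lie_iso_sub :: "('v::real_vector \<Rightarrow> 'v \<Rightarrow> 'v) \<Rightarrow> 'v set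
     \<Rightarrow> ('w::real_vector \<Rightarrow> 'w \<Rightarrow> 'w) \<Rightarrow> bool" where
  "lie_iso_sub b S c \<longleftrightarrow> (\<exists>f. linear f \<and> bij_betw f S UNIV
      \<and> (\<forall>x\<in>S. \<forall>y\<in>S. f (b x y) = c (f x) (f y)))"

definition bargmann_sub :: "V set" where
  "bargmann_sub = span ({vH, vJ, vHs, vJs} \<union> range (\<lambda>a. vP a) \<union> range (\<lambda>a. vG a))"

end

theory Submission
  imports Defs
begin

(*
  Every claim is multilinear, so it suffices to verify it on basis vectors, which is a finite
  computation. The Jacobiator of an alternating bilinear map is itself alternating, so the Jacobi
  identity needs checking only on strictly increasing triples of the 22 basis vectors. The metric is nondegenerate because
  every basis vector has an explicit dual, and span{H, J, P_a, G_a, H*, J*} is the image of the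
  coordinate inclusion of the Extended Bargmann algebra, which is an injective homomorphism.
*)

section \<open>Bilinear maps on coordinate spaces\<close>

definition bilinear_extension ::
    "('n::finite \<Rightarrow> 'n \<Rightarrow> 'v::real_vector) \<Rightarrow> real^'n \<Rightarrow> real^'n \<Rightarrow> 'v" where
  "bilinear_extension f x y = (\<Sum>i\<in>UNIV. \<Sum>j\<in>UNIV. (x $ i * y $ j) *\<^sub>R f i j)"

lemma bilinear_bilinear_extension: "bilinear (bilinear_extension f)"
  unfolding bilinear_def linear_iff bilinear_extension_def
  by (simp add: algebra_simps sum.distrib scaleR_sum_right)

lemma sum_scaleR_axis:
  "(\<Sum>j\<in>UNIV. (c * axis k 1 $ j) *\<^sub>R f j) = c *\<^sub>R (f k :: 'v::real_vector)"
proof -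
  have "(c * axis k 1 $ j) *\<^sub>R f j = (if j = k then c *\<^sub>R f j else 0)" for j
    by (simp add: axis_def)
  then show ?thesis by simp
qed

lemma bilinear_extension_axis_right:
  "bilinear_extension f x (axis j 1) = (\<Sum>i\<in>UNIV. x $ i *\<^sub>R f i j)"
  by (simp add: bilinear_extension_def sum_scaleR_axis)

lemma bilinear_extension_axis: "bilinear_extension f (axis i 1) (axis j 1) = f i j"
  by (simp add: bilinear_extension_axis_right mult.commute[of "axis i 1 $ _"]
      sum_scaleR_axis[where c = 1, simplified])

lemma bilinear_extension_swap:
  "bilinear_extension f y x = bilinear_extension (\<lambda>i j. f j i) x y"
  unfolding bilinear_extension_def by (subst sum.swap) (simp add: mult.commute)

lemma bilinear_extension_sym:
  assumes "\<And>i j. f j i = f i j"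
  shows "bilinear_extension f y x = bilinear_extension f x y"
proof -
  have "(\<lambda>i j. f j i) = f"
    by (intro ext assms)
  then show ?thesis
    using bilinear_extension_swap[of f y x] by simp
qed

lemma eq_neg_self_imp_eq_0:
  assumes "(a::'a::real_vector) = - a"
  shows "a = 0"
proof -
  have "2 *\<^sub>R a = a + a" by (rule scaleR_2)
  also have "\<dots> = a + - a" by (subst (2) assms) (rule refl)
  finally show ?thesis by simp
qed

lemma bilinear_extension_self_eq_0:
  assumes "\<And>i j. f j i = - f i j"
  shows "bilinear_extension f x x = 0"
proof (rule eq_neg_self_imp_eq_0)
  have "(\<lambda>i j. f j i) = (\<lambda>i j. - f i j)"
    by (intro ext assms)
  then show "bilinear_extension f x x = - bilinear_extension f x x"
    by (subst bilinear_extension_swap) (simp add: bilinear_extension_def sum_negf)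
qed

lemma Basis_real_vec: "(Basis :: (real^'n) set) = range (\<lambda>i. axis i 1)"
  by (auto simp: Basis_vec_def)

lemma trilinear_eq_0_on_Basis:
  fixes t :: "'a::euclidean_space \<Rightarrow> 'b::euclidean_space \<Rightarrow> 'c::euclidean_space \<Rightarrow> 'd::real_vector"
  assumes "\<And>z. bilinear (\<lambda>x y. t x y z)" and "\<And>x y. linear (t x y)"
    and "\<And>a b c. a \<in> Basis \<Longrightarrow> b \<in> Basis \<Longrightarrow> c \<in> Basis \<Longrightarrow> t a b c = 0"
  shows "t x y z = 0"
proof -
  have "t a b = (\<lambda>_. 0)" if "a \<in> Basis" "b \<in> Basis" for a b
    using linear_eq_stdbasis[OF assms(2) linear_zero] assms(3) that by blast
  then have "(\<lambda>x y. t x y z) = (\<lambda>x y. 0)"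
    by (intro bilinear_eq_stdbasis[OF assms(1)]) (auto simp: bilinear_def linear_zero)
  then show ?thesis by meson
qed

lemma nondegenerate_if_dual_basis:
  fixes B :: "real^'n \<Rightarrow> real^'n \<Rightarrow> real"
  assumes "bilinear B" and dual: "\<And>i j. B (axis i 1) (d j) = (if i = j then 1 else 0)"
    and "\<forall>y. B x y = 0"
  shows "x = 0"
proof -
  have "(\<lambda>x. B x (d j)) = (\<lambda>x. x $ j)" for j
  proof (rule linear_eq_stdbasis)
    show "linear (\<lambda>x. B x (d j))"
      using assms(1) by (simp add: bilinear_def)
    show "linear (\<lambda>x::real^'n. x $ j)"
      by (simp add: linear_iff)
    fix b :: "real^'n"
    assume "b \<in> Basis"
    then obtain i where "b = axis i 1" by (auto simp: Basis_real_vec)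
    then show "B b (d j) = b $ j"
      using dual[of i j] by (simp add: axis_def)
  qed
  then show ?thesis
    using assms(3) by (metis vec_eq_iff zero_index)
qed

section \<open>Finite linear combinations of standard basis vectors\<close>

definition lincomb :: "('n::finite \<times> real) list \<Rightarrow> real^'n" where
  "lincomb L = (\<Sum>(k, c)\<leftarrow>L. c *\<^sub>R axis k 1)"

definition lincomb_coeff :: "('n \<times> real) list \<Rightarrow> 'n \<Rightarrow> real" where
  "lincomb_coeff L l = (\<Sum>(k, c)\<leftarrow>L. if k = l then c else 0)"

lemma lincomb_Nil: "lincomb [] = 0"
  by (simp add: lincomb_def)

lemma lincomb_Cons: "lincomb ((k, c) # L) = c *\<^sub>R axis k 1 + lincomb L"
  by (simp add: lincomb_def)

lemma lincomb_append: "lincomb (L @ M) = lincomb L + lincomb M"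
  by (simp add: lincomb_def)

lemma scaleR_lincomb: "c *\<^sub>R lincomb L = lincomb (map (\<lambda>(k, d). (k, c * d)) L)"
  by (induction L) (auto simp: lincomb_Nil lincomb_Cons scaleR_add_right)

lemma uminus_lincomb: "- lincomb L = lincomb (map (\<lambda>(k, d). (k, - d)) L)"
  using scaleR_lincomb[of "-1" L] by simp

lemma lincomb_component: "lincomb L $ l = lincomb_coeff L l"
  by (induction L) (auto simp: lincomb_Nil lincomb_Cons lincomb_coeff_def axis_def)

lemma lincomb_coeff_notin: "l \<notin> fst ` set L \<Longrightarrow> lincomb_coeff L l = 0"
  by (induction L) (auto simp: lincomb_coeff_def)

(* Stated with list_all over the occurring indices, so that simp decides it on concrete lists. *)
lemma lincomb_eq_iff:
  "lincomb L = lincomb M \<longleftrightarrow> list_all (\<lambda>l. lincomb_coeff L l = lincomb_coeff M l) (map fst (L @ M))"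
proof -
  have "lincomb_coeff L l = lincomb_coeff M l" if "l \<notin> fst ` set (L @ M)" for l
    using that by (simp add: lincomb_coeff_notin image_Un)
  then show ?thesis
    by (auto simp: vec_eq_iff lincomb_component list_all_iff)
qed

lemma lincomb_eq_0_iff: "lincomb L = 0 \<longleftrightarrow> list_all (\<lambda>l. lincomb_coeff L l = 0) (map fst L)"
  using lincomb_eq_iff[of L "[]"] by (simp add: lincomb_coeff_def lincomb_Nil)

lemma bilinear_lincomb_left:
  "bilinear b \<Longrightarrow> b (lincomb L) y = (\<Sum>(k, c)\<leftarrow>L. c *\<^sub>R b (axis k 1) y)"
  by (induction L) (auto simp: lincomb_Nil lincomb_Cons bilinear_ladd bilinear_lmul bilinear_lzero)

lemma bilinear_lincomb_right:
  "bilinear b \<Longrightarrow> b x (lincomb L) = (\<Sum>(k, c)\<leftarrow>L. c *\<^sub>R b x (axis k 1))"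
  by (induction L) (auto simp: lincomb_Nil lincomb_Cons bilinear_radd bilinear_rmul bilinear_rzero)

section \<open>Alternating maps, Lie algebras and invariant forms\<close>

definition jacobiator :: "('v::real_vector \<Rightarrow> 'v \<Rightarrow> 'v) \<Rightarrow> 'v \<Rightarrow> 'v \<Rightarrow> 'v \<Rightarrow> 'v" where
  "jacobiator b x y z = b x (b y z) + b y (b z x) + b z (b x y)"

lemma alternating_bilinear_anticommute:
  assumes "bilinear b" and "\<And>x. b x x = 0"
  shows "b y x = - b x y"
proof -
  have "0 = b (x + y) (x + y)" using assms(2) by simp
  also have "\<dots> = b x x + b x y + b y x + b y y"
    by (simp add: bilinear_ladd[OF assms(1)] bilinear_radd[OF assms(1)])
  also have "\<dots> = b x y + b y x"
    using assms(2) by simp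
  finally show ?thesis by (metis eq_neg_iff_add_eq_0 add.commute)
qed

lemma
  assumes "bilinear b" and "\<And>x. b x x = 0"
  shows jacobiator_swap12: "jacobiator b y x z = - jacobiator b x y z"
    and jacobiator_swap23: "jacobiator b x z y = - jacobiator b x y z"
proof -
  note anti = alternating_bilinear_anticommute[OF assms]
  note rneg = bilinear_rneg[OF assms(1)]
  show "jacobiator b y x z = - jacobiator b x y z"
    unfolding jacobiator_def using anti[of x z] anti[of y z] anti[of x y] by (simp add: rneg)
  show "jacobiator b x z y = - jacobiator b x y z"
    unfolding jacobiator_def using anti[of y z] anti[of x y] anti[of x z] by (simp add: rneg)
qed

lemma alternating_eq_0_if_sorted:
  fixes J :: "'n \<Rightarrow> 'n \<Rightarrow> 'n \<Rightarrow> 'v::real_vector" and r :: "'n \<Rightarrow> nat"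
  assumes "inj r"
    and swap12: "\<And>i j k. J j i k = - J i j k" and swap23: "\<And>i j k. J i k j = - J i j k"
    and sorted: "\<And>i j k. r i < r j \<Longrightarrow> r j < r k \<Longrightarrow> J i j k = 0"
  shows "J i j k = 0"
proof -
  have diag12: "J i i k = 0" for i k by (rule eq_neg_self_imp_eq_0) (rule swap12)
  have diag23: "J i j j = 0" for i j by (rule eq_neg_self_imp_eq_0) (rule swap23)
  have diag13: "J i j i = 0" for i j by (metis swap12 diag23 minus_zero)
  show ?thesis
  proof (cases "i = j \<or> j = k \<or> i = k")
    case True
    then show ?thesis using diag12 diag23 diag13 by blast
  next
    case False
    then have "r i \<noteq> r j" "r j \<noteq> r k" "r i \<noteq> r k" using \<open>inj r\<close> by (auto dest: injD)
    then consider "r i < r j" "r j < r k" | "r j < r i" "r i < r k" | "r i < r k" "r k < r j"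
      | "r j < r k" "r k < r i" | "r k < r i" "r i < r j" | "r k < r j" "r j < r i"
      by linarith
    then show ?thesis
      by cases (metis sorted swap12 swap23 minus_zero)+
  qed
qed

lemma trilinear_jacobiator:
  assumes "bilinear b"
  shows "bilinear (\<lambda>x y. jacobiator b x y z)" and "linear (jacobiator b x y)"
  using assms unfolding jacobiator_def bilinear_def linear_iff
  by (simp_all add: algebra_simps)

lemma lie_algebra_if_jacobiator_axis:
  fixes b :: "real^'n \<Rightarrow> real^'n \<Rightarrow> real^'n"
  assumes "bilinear b" and "\<And>x. b x x = 0"
    and "\<And>i j k. jacobiator b (axis i 1) (axis j 1) (axis k 1) = 0"
  shows "lie_algebra b"
proof -
  have "jacobiator b x y z = 0" for x y z
    by (rule trilinear_eq_0_on_Basis[OF trilinear_jacobiator[OF assms(1)]])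
      (auto simp: Basis_real_vec assms(3))
  then show ?thesis
    using assms(1,2) unfolding lie_algebra_def jacobiator_def by blast
qed

lemma invariant_if_axis:
  fixes b :: "real^'n \<Rightarrow> real^'n \<Rightarrow> real^'n" and B :: "real^'n \<Rightarrow> real^'n \<Rightarrow> real"
  assumes "bilinear b" and "bilinear B"
    and "\<And>i j k. B (b (axis k 1) (axis i 1)) (axis j 1) + B (axis i 1) (b (axis k 1) (axis j 1)) = 0"
  shows "B (b z x) y + B x (b z y) = 0"
proof (rule trilinear_eq_0_on_Basis[where t = "\<lambda>z x y. B (b z x) y + B x (b z y)"])
  show "bilinear (\<lambda>z x. B (b z x) y + B x (b z y))" and "linear (\<lambda>y. B (b z x) y + B x (b z y))"
    for x y z
    unfolding bilinear_def linear_iff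
    by (simp_all add: algebra_simps bilinear_ladd[OF assms(1)] bilinear_radd[OF assms(1)]
        bilinear_lmul[OF assms(1)] bilinear_rmul[OF assms(1)] bilinear_ladd[OF assms(2)]
        bilinear_radd[OF assms(2)] bilinear_lmul[OF assms(2)] bilinear_rmul[OF assms(2)])
qed (auto simp: Basis_real_vec assms(3))

lemma lie_subalgebra_range:
  assumes "linear f" and "\<And>u v. b (f u) (f v) = f (c u v)"
  shows "lie_subalgebra b (range f)"
  unfolding lie_subalgebra_def
  using assms linear_subspace_image[OF assms(1) subspace_UNIV] by auto

lemma lie_iso_sub_range:
  fixes f :: "'w::euclidean_space \<Rightarrow> 'v::euclidean_space"
  assumes "linear f" and "inj f" and "\<And>u v. b (f u) (f v) = f (c u v)"
  shows "lie_iso_sub b (range f) c"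
proof -
  obtain g where g: "linear g" "g \<circ> f = id"
    using linear_injective_left_inverse[OF assms(1,2)] by blast
  then have gf: "g (f u) = u" for u by (metis comp_apply id_apply)
  have "bij_betw g (range f) UNIV"
    by (rule bij_betw_byWitness[where f' = f]) (auto simp: gf)
  moreover have "g (b x y) = c (g x) (g y)" if "x \<in> range f" "y \<in> range f" for x y
    using that assms(3) gf by auto
  ultimately show ?thesis
    unfolding lie_iso_sub_def using g(1) by blast
qed

section \<open>Structure constants\<close>

definition bas_list :: "bas list" where
  "bas_list = [bJ, bH, bG I1, bG I2, bP I1, bP I2, bJa I1, bJa I2, bHa I1, bHa I2,
    bGs S11, bGs S12, bGs S22, bPs S11, bPs S12, bPs S22, bJs, bHs, bJsa I1, bJsa I2,
    bHsa I1, bHsa I2]"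

lemma set_bas_list: "set bas_list = UNIV"
  by (simp add: UNIV_bas UNIV_idx UNIV_sym bas_list_def image_def; blast)

(* bracket_table i j, assembled from the rows row_X j = [X, j], lists the nonzero
   coordinates of bb i j (bb_eq_bracket_table); it caches the expensive evaluation of the
   definition of bb for all checks below. *)
fun row_J :: "bas \<Rightarrow> (bas \<times> real) list" where
  "row_J (bG I1) = [(bG I2, 1)]"
| "row_J (bG I2) = [(bG I1, -1)]"
| "row_J (bP I1) = [(bP I2, 1)]"
| "row_J (bP I2) = [(bP I1, -1)]"
| "row_J (bJa I1) = [(bJa I2, 1)]"
| "row_J (bJa I2) = [(bJa I1, -1)]"
| "row_J (bHa I1) = [(bHa I2, 1)]"
| "row_J (bHa I2) = [(bHa I1, -1)]"
| "row_J (bGs S11) = [(bGs S12, 2)]"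
| "row_J (bGs S12) = [(bGs S11, -1), (bGs S22, 1)]"
| "row_J (bGs S22) = [(bGs S12, -2)]"
| "row_J (bPs S11) = [(bPs S12, 2)]"
| "row_J (bPs S12) = [(bPs S11, -1), (bPs S22, 1)]"
| "row_J (bPs S22) = [(bPs S12, -2)]"
| "row_J (bJsa I1) = [(bJsa I2, 1)]"
| "row_J (bJsa I2) = [(bJsa I1, -1)]"
| "row_J (bHsa I1) = [(bHsa I2, 1)]"
| "row_J (bHsa I2) = [(bHsa I1, -1)]"
| "row_J _ = []"

fun row_H :: "bas \<Rightarrow> (bas \<times> real) list" where
  "row_H (bG I1) = [(bP I2, 1)]"
| "row_H (bG I2) = [(bP I1, -1)]"
| "row_H (bJa I1) = [(bHa I2, 1)]"
| "row_H (bJa I2) = [(bHa I1, -1)]"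
| "row_H (bGs S11) = [(bPs S12, 2)]"
| "row_H (bGs S12) = [(bPs S11, -1), (bPs S22, 1)]"
| "row_H (bGs S22) = [(bPs S12, -2)]"
| "row_H (bHsa I1) = [(bJsa I2, 1)]"
| "row_H (bHsa I2) = [(bJsa I1, -1)]"
| "row_H _ = []"

fun row_G1 :: "bas \<Rightarrow> (bas \<times> real) list" where
  "row_G1 bJ = [(bG I2, -1)]"
| "row_G1 bH = [(bP I2, -1)]"
| "row_G1 (bG I2) = [(bHs, 1)]"
| "row_G1 (bP I2) = [(bJs, 1)]"
| "row_G1 (bJa I1) = [(bGs S12, -1)]"
| "row_G1 (bJa I2) = [(bGs S11, -1), (bGs S22, -2)]"
| "row_G1 (bHa I1) = [(bPs S12, -1)]"
| "row_G1 (bHa I2) = [(bPs S11, -1), (bPs S22, -2)]"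
| "row_G1 (bGs S12) = [(bHsa I1, 1)]"
| "row_G1 (bGs S22) = [(bHsa I2, 2)]"
| "row_G1 (bPs S12) = [(bJsa I1, 1)]"
| "row_G1 (bPs S22) = [(bJsa I2, 2)]"
| "row_G1 _ = []"

fun row_G2 :: "bas \<Rightarrow> (bas \<times> real) list" where
  "row_G2 bJ = [(bG I1, 1)]"
| "row_G2 bH = [(bP I1, 1)]"
| "row_G2 (bG I1) = [(bHs, -1)]"
| "row_G2 (bP I1) = [(bJs, -1)]"
| "row_G2 (bJa I1) = [(bGs S11, 2), (bGs S22, 1)]"
| "row_G2 (bJa I2) = [(bGs S12, 1)]"
| "row_G2 (bHa I1) = [(bPs S11, 2), (bPs S22, 1)]"
| "row_G2 (bHa I2) = [(bPs S12, 1)]"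
| "row_G2 (bGs S11) = [(bHsa I1, -2)]"
| "row_G2 (bGs S12) = [(bHsa I2, -1)]"
| "row_G2 (bPs S11) = [(bJsa I1, -2)]"
| "row_G2 (bPs S12) = [(bJsa I2, -1)]"
| "row_G2 _ = []"

fun row_P1 :: "bas \<Rightarrow> (bas \<times> real) list" where
  "row_P1 bJ = [(bP I2, -1)]"
| "row_P1 (bG I2) = [(bJs, 1)]"
| "row_P1 (bJa I1) = [(bPs S12, -1)]"
| "row_P1 (bJa I2) = [(bPs S11, -1), (bPs S22, -2)]"
| "row_P1 (bGs S12) = [(bJsa I1, 1)]"
| "row_P1 (bGs S22) = [(bJsa I2, 2)]"
| "row_P1 _ = []"

fun row_P2 :: "bas \<Rightarrow> (bas \<times> real) list" where
  "row_P2 bJ = [(bP I1, 1)]"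
| "row_P2 (bG I1) = [(bJs, -1)]"
| "row_P2 (bJa I1) = [(bPs S11, 2), (bPs S22, 1)]"
| "row_P2 (bJa I2) = [(bPs S12, 1)]"
| "row_P2 (bGs S11) = [(bJsa I1, -2)]"
| "row_P2 (bGs S12) = [(bJsa I2, -1)]"
| "row_P2 _ = []"

fun row_Ja1 :: "bas \<Rightarrow> (bas \<times> real) list" where
  "row_Ja1 bJ = [(bJa I2, -1)]"
| "row_Ja1 bH = [(bHa I2, -1)]"
| "row_Ja1 (bG I1) = [(bGs S12, 1)]"
| "row_Ja1 (bG I2) = [(bGs S11, -2), (bGs S22, -1)]"
| "row_Ja1 (bP I1) = [(bPs S12, 1)]"
| "row_Ja1 (bP I2) = [(bPs S11, -2), (bPs S22, -1)]"
| "row_Ja1 (bJa I2) = [(bJ, 1)]"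
| "row_Ja1 (bHa I2) = [(bH, 1)]"
| "row_Ja1 (bGs S11) = [(bG I2, 2)]"
| "row_Ja1 (bGs S12) = [(bG I1, -1)]"
| "row_Ja1 (bPs S11) = [(bP I2, 2)]"
| "row_Ja1 (bPs S12) = [(bP I1, -1)]"
| "row_Ja1 bJs = [(bJsa I2, -1)]"
| "row_Ja1 bHs = [(bHsa I2, -1)]"
| "row_Ja1 (bJsa I2) = [(bJs, 1)]"
| "row_Ja1 (bHsa I2) = [(bHs, 1)]"
| "row_Ja1 _ = []"

fun row_Ja2 :: "bas \<Rightarrow> (bas \<times> real) list" where
  "row_Ja2 bJ = [(bJa I1, 1)]"
| "row_Ja2 bH = [(bHa I1, 1)]"
| "row_Ja2 (bG I1) = [(bGs S11, 1), (bGs S22, 2)]"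
| "row_Ja2 (bG I2) = [(bGs S12, -1)]"
| "row_Ja2 (bP I1) = [(bPs S11, 1), (bPs S22, 2)]"
| "row_Ja2 (bP I2) = [(bPs S12, -1)]"
| "row_Ja2 (bJa I1) = [(bJ, -1)]"
| "row_Ja2 (bHa I1) = [(bH, -1)]"
| "row_Ja2 (bGs S12) = [(bG I2, 1)]"
| "row_Ja2 (bGs S22) = [(bG I1, -2)]"
| "row_Ja2 (bPs S12) = [(bP I2, 1)]"
| "row_Ja2 (bPs S22) = [(bP I1, -2)]"
| "row_Ja2 bJs = [(bJsa I1, 1)]"
| "row_Ja2 bHs = [(bHsa I1, 1)]"
| "row_Ja2 (bJsa I1) = [(bJs, -1)]"
| "row_Ja2 (bHsa I1) = [(bHs, -1)]"
| "row_Ja2 _ = []"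

fun row_Ha1 :: "bas \<Rightarrow> (bas \<times> real) list" where
  "row_Ha1 bJ = [(bHa I2, -1)]"
| "row_Ha1 (bG I1) = [(bPs S12, 1)]"
| "row_Ha1 (bG I2) = [(bPs S11, -2), (bPs S22, -1)]"
| "row_Ha1 (bJa I2) = [(bH, 1)]"
| "row_Ha1 (bGs S11) = [(bP I2, 2)]"
| "row_Ha1 (bGs S12) = [(bP I1, -1)]"
| "row_Ha1 bHs = [(bJsa I2, -1)]"
| "row_Ha1 (bHsa I2) = [(bJs, 1)]"
| "row_Ha1 _ = []"

fun row_Ha2 :: "bas \<Rightarrow> (bas \<times> real) list" where
  "row_Ha2 bJ = [(bHa I1, 1)]"
| "row_Ha2 (bG I1) = [(bPs S11, 1), (bPs S22, 2)]"
| "row_Ha2 (bG I2) = [(bPs S12, -1)]"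
| "row_Ha2 (bJa I1) = [(bH, -1)]"
| "row_Ha2 (bGs S12) = [(bP I2, 1)]"
| "row_Ha2 (bGs S22) = [(bP I1, -2)]"
| "row_Ha2 bHs = [(bJsa I1, 1)]"
| "row_Ha2 (bHsa I1) = [(bJs, -1)]"
| "row_Ha2 _ = []"

fun row_Gs11 :: "bas \<Rightarrow> (bas \<times> real) list" where
  "row_Gs11 bJ = [(bGs S12, -2)]"
| "row_Gs11 bH = [(bPs S12, -2)]"
| "row_Gs11 (bG I2) = [(bHsa I1, 2)]"
| "row_Gs11 (bP I2) = [(bJsa I1, 2)]"
| "row_Gs11 (bJa I1) = [(bG I2, -2)]"
| "row_Gs11 (bHa I1) = [(bP I2, -2)]"
| "row_Gs11 (bGs S12) = [(bHs, 2)]"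
| "row_Gs11 (bPs S12) = [(bJs, 2)]"
| "row_Gs11 _ = []"

fun row_Gs12 :: "bas \<Rightarrow> (bas \<times> real) list" where
  "row_Gs12 bJ = [(bGs S11, 1), (bGs S22, -1)]"
| "row_Gs12 bH = [(bPs S11, 1), (bPs S22, -1)]"
| "row_Gs12 (bG I1) = [(bHsa I1, -1)]"
| "row_Gs12 (bG I2) = [(bHsa I2, 1)]"
| "row_Gs12 (bP I1) = [(bJsa I1, -1)]"
| "row_Gs12 (bP I2) = [(bJsa I2, 1)]"
| "row_Gs12 (bJa I1) = [(bG I1, 1)]"
| "row_Gs12 (bJa I2) = [(bG I2, -1)]"
| "row_Gs12 (bHa I1) = [(bP I1, 1)]"
| "row_Gs12 (bHa I2) = [(bP I2, -1)]"
| "row_Gs12 (bGs S11) = [(bHs, -2)]"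
| "row_Gs12 (bGs S22) = [(bHs, 2)]"
| "row_Gs12 (bPs S11) = [(bJs, -2)]"
| "row_Gs12 (bPs S22) = [(bJs, 2)]"
| "row_Gs12 _ = []"

fun row_Gs22 :: "bas \<Rightarrow> (bas \<times> real) list" where
  "row_Gs22 bJ = [(bGs S12, 2)]"
| "row_Gs22 bH = [(bPs S12, 2)]"
| "row_Gs22 (bG I1) = [(bHsa I2, -2)]"
| "row_Gs22 (bP I1) = [(bJsa I2, -2)]"
| "row_Gs22 (bJa I2) = [(bG I1, 2)]"
| "row_Gs22 (bHa I2) = [(bP I1, 2)]"
| "row_Gs22 (bGs S12) = [(bHs, -2)]"
| "row_Gs22 (bPs S12) = [(bJs, -2)]"
| "row_Gs22 _ = []"

fun row_Ps11 :: "bas \<Rightarrow> (bas \<times> real) list" where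
  "row_Ps11 bJ = [(bPs S12, -2)]"
| "row_Ps11 (bG I2) = [(bJsa I1, 2)]"
| "row_Ps11 (bJa I1) = [(bP I2, -2)]"
| "row_Ps11 (bGs S12) = [(bJs, 2)]"
| "row_Ps11 _ = []"

fun row_Ps12 :: "bas \<Rightarrow> (bas \<times> real) list" where
  "row_Ps12 bJ = [(bPs S11, 1), (bPs S22, -1)]"
| "row_Ps12 (bG I1) = [(bJsa I1, -1)]"
| "row_Ps12 (bG I2) = [(bJsa I2, 1)]"
| "row_Ps12 (bJa I1) = [(bP I1, 1)]"
| "row_Ps12 (bJa I2) = [(bP I2, -1)]"
| "row_Ps12 (bGs S11) = [(bJs, -2)]"
| "row_Ps12 (bGs S22) = [(bJs, 2)]"
| "row_Ps12 _ = []"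

fun row_Ps22 :: "bas \<Rightarrow> (bas \<times> real) list" where
  "row_Ps22 bJ = [(bPs S12, 2)]"
| "row_Ps22 (bG I1) = [(bJsa I2, -2)]"
| "row_Ps22 (bJa I2) = [(bP I1, 2)]"
| "row_Ps22 (bGs S12) = [(bJs, -2)]"
| "row_Ps22 _ = []"

fun row_Js :: "bas \<Rightarrow> (bas \<times> real) list" where
  "row_Js (bJa I1) = [(bJsa I2, 1)]"
| "row_Js (bJa I2) = [(bJsa I1, -1)]"
| "row_Js _ = []"

fun row_Hs :: "bas \<Rightarrow> (bas \<times> real) list" where
  "row_Hs (bJa I1) = [(bHsa I2, 1)]"
| "row_Hs (bJa I2) = [(bHsa I1, -1)]"
| "row_Hs (bHa I1) = [(bJsa I2, 1)]"
| "row_Hs (bHa I2) = [(bJsa I1, -1)]"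
| "row_Hs _ = []"

fun row_Jsa1 :: "bas \<Rightarrow> (bas \<times> real) list" where
  "row_Jsa1 bJ = [(bJsa I2, -1)]"
| "row_Jsa1 (bJa I2) = [(bJs, 1)]"
| "row_Jsa1 _ = []"

fun row_Jsa2 :: "bas \<Rightarrow> (bas \<times> real) list" where
  "row_Jsa2 bJ = [(bJsa I1, 1)]"
| "row_Jsa2 (bJa I1) = [(bJs, -1)]"
| "row_Jsa2 _ = []"

fun row_Hsa1 :: "bas \<Rightarrow> (bas \<times> real) list" where
  "row_Hsa1 bJ = [(bHsa I2, -1)]"
| "row_Hsa1 bH = [(bJsa I2, -1)]"
| "row_Hsa1 (bJa I2) = [(bHs, 1)]"
| "row_Hsa1 (bHa I2) = [(bJs, 1)]"
| "row_Hsa1 _ = []"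

fun row_Hsa2 :: "bas \<Rightarrow> (bas \<times> real) list" where
  "row_Hsa2 bJ = [(bHsa I1, 1)]"
| "row_Hsa2 bH = [(bJsa I1, 1)]"
| "row_Hsa2 (bJa I1) = [(bHs, -1)]"
| "row_Hsa2 (bHa I1) = [(bJs, -1)]"
| "row_Hsa2 _ = []"

fun bracket_table :: "bas \<Rightarrow> bas \<Rightarrow> (bas \<times> real) list" where
  "bracket_table bJ j = row_J j"
| "bracket_table bH j = row_H j"
| "bracket_table (bG I1) j = row_G1 j"
| "bracket_table (bG I2) j = row_G2 j"
| "bracket_table (bP I1) j = row_P1 j"
| "bracket_table (bP I2) j = row_P2 j"
| "bracket_table (bJa I1) j = row_Ja1 j"
| "bracket_table (bJa I2) j = row_Ja2 j"
| "bracket_table (bHa I1) j = row_Ha1 j"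
| "bracket_table (bHa I2) j = row_Ha2 j"
| "bracket_table (bGs S11) j = row_Gs11 j"
| "bracket_table (bGs S12) j = row_Gs12 j"
| "bracket_table (bGs S22) j = row_Gs22 j"
| "bracket_table (bPs S11) j = row_Ps11 j"
| "bracket_table (bPs S12) j = row_Ps12 j"
| "bracket_table (bPs S22) j = row_Ps22 j"
| "bracket_table bJs j = row_Js j"
| "bracket_table bHs j = row_Hs j"
| "bracket_table (bJsa I1) j = row_Jsa1 j"
| "bracket_table (bJsa I2) j = row_Jsa2 j"
| "bracket_table (bHsa I1) j = row_Hsa1 j"
| "bracket_table (bHsa I2) j = row_Hsa2 j"

lemma sum_UNIV_idx: "(\<Sum>m\<in>UNIV. f m) = f I1 + f I2"
  by (simp add: UNIV_idx)

lemma lincomb_intro: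
  "ev k = lincomb [(k, 1)]"
  "lincomb L + lincomb M = lincomb (L @ M)"
  "lincomb L - lincomb M = lincomb (L @ map (\<lambda>(k, d). (k, - d)) M)"
  by (simp_all add: ev_def lincomb_Cons lincomb_Nil lincomb_append flip: uminus_lincomb)

lemma bb_eq_bracket_table: "bb i j = lincomb (bracket_table i j)"
proof -
  have "\<forall>i\<in>set bas_list. \<forall>j\<in>set bas_list. bb i j = lincomb (bracket_table i j)"
    by (simp add: bas_list_def bb_def sum_UNIV_idx Tsym_def dl_def lincomb_intro scaleR_lincomb
        uminus_lincomb lincomb_eq_iff lincomb_eq_0_iff lincomb_coeff_def flip: lincomb_Nil)
  then show ?thesis by (simp add: set_bas_list)
qed

lemma br_eq_bilinear_extension: "br = bilinear_extension bb"
  by (intro ext) (simp add: br_def bilinear_extension_def)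

lemma bilinear_br: "bilinear br"
  by (simp add: br_eq_bilinear_extension bilinear_bilinear_extension)

lemma br_ev: "br (ev i) (ev j) = bb i j"
  by (simp add: br_eq_bilinear_extension ev_def bilinear_extension_axis)

lemma bb_antisym: "bb j i = - bb i j"
proof -
  have "\<forall>i\<in>set bas_list. \<forall>j\<in>set bas_list.
      lincomb (bracket_table i j @ bracket_table j i) = 0"
    by (simp add: bas_list_def lincomb_eq_0_iff lincomb_coeff_def)
  then show ?thesis
    by (simp add: set_bas_list bb_eq_bracket_table lincomb_append eq_neg_iff_add_eq_0 add.commute)
qed

lemma br_self: "br x x = 0"
  unfolding br_eq_bilinear_extension by (rule bilinear_extension_self_eq_0) (rule bb_antisym)

section \<open>The Jacobi identity\<close>

definition bracket_list :: "bas \<Rightarrow> (bas \<times> real) list \<Rightarrow> (bas \<times> real) list" where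
  "bracket_list i L = concat (map (\<lambda>(k, c). map (\<lambda>(l, d). (l, c * d)) (bracket_table i k)) L)"

lemma br_ev_lincomb: "br (ev i) (lincomb L) = lincomb (bracket_list i L)"
proof (induction L)
  case Nil
  then show ?case by (simp add: bracket_list_def lincomb_Nil bilinear_rzero[OF bilinear_br])
next
  case (Cons a L)
  then show ?case
    by (cases a) (simp add: lincomb_Cons bracket_list_def lincomb_append scaleR_lincomb
        bilinear_radd[OF bilinear_br] bilinear_rmul[OF bilinear_br] br_ev bb_eq_bracket_table
        flip: ev_def)
qed

definition jacobi_list :: "bas \<Rightarrow> bas \<Rightarrow> bas \<Rightarrow> (bas \<times> real) list" where
  "jacobi_list i j k = bracket_list i (bracket_table j k) @ bracket_list j (bracket_table k i)
    @ bracket_list k (bracket_table i j)"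

lemma jacobiator_ev: "jacobiator br (ev i) (ev j) (ev k) = lincomb (jacobi_list i j k)"
  by (simp add: jacobiator_def br_ev bb_eq_bracket_table br_ev_lincomb jacobi_list_def
      lincomb_append)

definition bas_rank :: "bas \<Rightarrow> nat" where
  "bas_rank b = length (takeWhile (\<lambda>c. c \<noteq> b) bas_list)"

lemma inj_bas_rank: "inj bas_rank"
proof (rule inj_on_inverseI)
  fix b :: bas
  have "length (takeWhile (\<lambda>c. c \<noteq> b) xs) < length xs" if "b \<in> set xs" for xs
    using that by (induction xs) auto
  then have "bas_rank b < length bas_list"
    unfolding bas_rank_def using set_bas_list by blast
  then show "bas_list ! bas_rank b = b"
    unfolding bas_rank_def using nth_length_takeWhile by fastforce
qed

lemma jacobi_list_sorted_eq_0:
  "bas_rank i < bas_rank j \<Longrightarrow> bas_rank j < bas_rank k \<Longrightarrow> lincomb (jacobi_list i j k) = 0"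
proof -
  have "\<forall>i\<in>set bas_list. \<forall>j\<in>set bas_list. \<forall>k\<in>set bas_list.
      bas_rank i < bas_rank j \<longrightarrow> bas_rank j < bas_rank k \<longrightarrow> lincomb (jacobi_list i j k) = 0"
    by (simp add: bas_list_def bas_rank_def jacobi_list_def bracket_list_def lincomb_eq_0_iff
        lincomb_coeff_def)
  then show "bas_rank i < bas_rank j \<Longrightarrow> bas_rank j < bas_rank k \<Longrightarrow> ?thesis"
    by (simp add: set_bas_list)
qed

lemma lie_algebra_br: "lie_algebra br"
proof (rule lie_algebra_if_jacobiator_axis[OF bilinear_br br_self])
  fix i j k
  show "jacobiator br (axis i 1) (axis j 1) (axis k 1) = 0"
    unfolding ev_def[symmetric]
  proof (rule alternating_eq_0_if_sorted[OF inj_bas_rank,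
        of "\<lambda>i j k. jacobiator br (ev i) (ev j) (ev k)"])
    show "jacobiator br (ev j) (ev i) (ev k) = - jacobiator br (ev i) (ev j) (ev k)"
      and "jacobiator br (ev i) (ev k) (ev j) = - jacobiator br (ev i) (ev j) (ev k)" for i j k
      by (rule jacobiator_swap12[OF bilinear_br br_self] jacobiator_swap23[OF bilinear_br br_self])+
  qed (simp add: jacobiator_ev jacobi_list_sorted_eq_0)
qed

section \<open>The invariant metric\<close>

lemma met_eq_bilinear_extension: "met = bilinear_extension gm"
  by (intro ext) (simp add: met_def bilinear_extension_def)

lemma bilinear_met: "bilinear met"
  by (simp add: met_eq_bilinear_extension bilinear_bilinear_extension)

lemma met_sym: "met y x = met x y"
  unfolding met_eq_bilinear_extension by (rule bilinear_extension_sym) (simp add: gm_def)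

lemma met_lincomb_ev: "met (lincomb L) (ev j) = (\<Sum>(l, c)\<leftarrow>L. c * gm l j)"
  by (simp add: met_eq_bilinear_extension bilinear_lincomb_left[OF bilinear_bilinear_extension]
      ev_def bilinear_extension_axis case_prod_beta)

lemma met_ev_lincomb: "met (ev i) (lincomb L) = (\<Sum>(l, c)\<leftarrow>L. c * gm i l)"
  by (simp add: met_eq_bilinear_extension bilinear_lincomb_right[OF bilinear_bilinear_extension]
      ev_def bilinear_extension_axis case_prod_beta)

lemma met_invariant: "met (br z x) y + met x (br z y) = 0"
proof (rule invariant_if_axis[OF bilinear_br bilinear_met])
  have table: "\<forall>k\<in>set bas_list. \<forall>i\<in>set bas_list. \<forall>j\<in>set bas_list.
      (\<Sum>(l, c)\<leftarrow>bracket_table k i. c * gm l j) + (\<Sum>(l, c)\<leftarrow>bracket_table k j. c * gm i l) = 0"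
    by (simp add: bas_list_def gm_def gt_def dl_def)
  fix i j k
  have "met (br (ev k) (ev i)) (ev j) + met (ev i) (br (ev k) (ev j))
      = (\<Sum>(l, c)\<leftarrow>bracket_table k i. c * gm l j) + (\<Sum>(l, c)\<leftarrow>bracket_table k j. c * gm i l)"
    by (simp only: br_ev bb_eq_bracket_table met_lincomb_ev met_ev_lincomb)
  also have "\<dots> = 0"
    using table by (simp only: set_bas_list UNIV_I ball_simps)
  finally show "met (br (axis k 1) (axis i 1)) (axis j 1)
      + met (axis i 1) (br (axis k 1) (axis j 1)) = 0"
    by (simp only: ev_def)
qed

(* In the coordinates S11, S22 the metric pairs P_ab with G_cd through the matrix
   [[4/3, -2/3], [-2/3, 4/3]], whose inverse is [[1, 1/2], [1/2, 1]]. *)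
fun dual_basis :: "bas \<Rightarrow> (bas \<times> real) list" where
  "dual_basis bJ = [(bJs, 1)]"
| "dual_basis bH = [(bHs, 1)]"
| "dual_basis (bG a) = [(bP a, 1)]"
| "dual_basis (bP a) = [(bG a, 1)]"
| "dual_basis (bJa a) = [(bJsa a, 1)]"
| "dual_basis (bHa a) = [(bHsa a, 1)]"
| "dual_basis (bGs S11) = [(bPs S11, 1), (bPs S22, 1/2)]"
| "dual_basis (bGs S12) = [(bPs S12, 1)]"
| "dual_basis (bGs S22) = [(bPs S22, 1), (bPs S11, 1/2)]"
| "dual_basis (bPs S11) = [(bGs S11, 1), (bGs S22, 1/2)]"
| "dual_basis (bPs S12) = [(bGs S12, 1)]"
| "dual_basis (bPs S22) = [(bGs S22, 1), (bGs S11, 1/2)]"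
| "dual_basis bJs = [(bJ, 1)]"
| "dual_basis bHs = [(bH, 1)]"
| "dual_basis (bJsa a) = [(bJa a, 1)]"
| "dual_basis (bHsa a) = [(bHa a, 1)]"

lemma met_dual_basis: "met (ev i) (lincomb (dual_basis j)) = (if i = j then 1 else 0)"
proof -
  have "\<forall>i\<in>set bas_list. \<forall>j\<in>set bas_list.
      (\<Sum>(l, c)\<leftarrow>dual_basis j. c * gm i l) = (if i = j then 1 else 0)"
    by (simp add: bas_list_def gm_def gt_def dl_def)
  then show ?thesis by (simp add: set_bas_list met_ev_lincomb)
qed

lemma met_nondegenerate: "\<forall>y. met x y = 0 \<Longrightarrow> x = 0"
  by (rule nondegenerate_if_dual_basis[OF bilinear_met met_dual_basis[unfolded ev_def]])

lemma invariant_metric_met: "invariant_metric br met"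
  unfolding invariant_metric_def using bilinear_met met_sym met_invariant met_nondegenerate
  by blast

section \<open>The Extended Bargmann subalgebra\<close>

fun bargmann_index :: "ebas \<Rightarrow> bas" where
  "bargmann_index eJ = bJ"
| "bargmann_index eH = bH"
| "bargmann_index (eG a) = bG a"
| "bargmann_index (eP a) = bP a"
| "bargmann_index eJs = bJs"
| "bargmann_index eHs = bHs"

lemma inj_bargmann_index: "inj bargmann_index"
proof (rule injI)
  show "bargmann_index d = bargmann_index e \<Longrightarrow> d = e" for d e
    by (cases d; cases e) simp_all
qed

definition ebas_list :: "ebas list" where
  "ebas_list = [eJ, eH, eG I1, eG I2, eP I1, eP I2, eJs, eHs]"

lemma set_ebas_list: "set ebas_list = UNIV"
  by (simp add: UNIV_ebas UNIV_idx ebas_list_def image_def; blast)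

definition bargmann_incl :: "EB \<Rightarrow> V" where
  "bargmann_incl w = (\<Sum>e\<in>UNIV. w $ e *\<^sub>R ev (bargmann_index e))"

lemma bargmann_incl_component:
  "bargmann_incl w $ b = (\<Sum>e\<in>UNIV. if bargmann_index e = b then w $ e else 0)"
  unfolding bargmann_incl_def
  by (simp add: ev_def axis_def) (rule sum.cong; auto)

lemma bargmann_incl_index: "bargmann_incl w $ bargmann_index e = w $ e"
  using inj_bargmann_index by (simp add: bargmann_incl_component inj_eq)

lemma bargmann_incl_notin: "b \<notin> range bargmann_index \<Longrightarrow> bargmann_incl w $ b = 0"
  unfolding bargmann_incl_component by (rule sum.neutral) auto

lemma linear_bargmann_incl: "linear bargmann_incl"
  unfolding linear_iff bargmann_incl_def
  by (simp add: scaleR_add_left sum.distrib scaleR_sum_right)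

lemma inj_bargmann_incl: "inj bargmann_incl"
proof (rule injI)
  fix u w assume "bargmann_incl u = bargmann_incl w"
  then have "bargmann_incl u $ bargmann_index e = bargmann_incl w $ bargmann_index e" for e
    by simp
  then show "u = w"
    by (simp add: vec_eq_iff bargmann_incl_index)
qed

lemma bargmann_incl_axis: "bargmann_incl (axis e 1) = ev (bargmann_index e)"
  unfolding bargmann_incl_def by (simp add: sum_scaleR_axis[where c = 1, simplified] mult.commute)

lemma range_bargmann_incl: "range bargmann_incl = bargmann_sub"
proof -
  have gens: "{vH, vJ, vHs, vJs} \<union> range (\<lambda>a. vP a) \<union> range (\<lambda>a. vG a)
      = bargmann_incl ` range (\<lambda>e. axis e 1)"
    by (simp add: image_image bargmann_incl_axis UNIV_ebas image_Un image_comp) blast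
  have "range bargmann_incl = span (bargmann_incl ` range (\<lambda>e. axis e 1))"
  proof -
    have "span (range (\<lambda>e. axis e 1)) = (UNIV :: EB set)"
      using span_Basis[where 'a = EB] unfolding Basis_real_vec .
    then show ?thesis
      by (simp add: span_linear_image[OF linear_bargmann_incl])
  qed
  then show ?thesis
    unfolding bargmann_sub_def gens .
qed

lemma ebr_eq_bilinear_extension: "ebr = bilinear_extension ebb"
  by (intro ext) (simp add: ebr_def bilinear_extension_def)

lemma bargmann_bracket_table:
  "bb (bargmann_index d) (bargmann_index e) = bargmann_incl (ebb d e)"
proof -
  let ?L = "bracket_table (bargmann_index d) (bargmann_index e)"
  have "\<forall>d\<in>set ebas_list. \<forall>e\<in>set ebas_list. \<forall>f\<in>set ebas_list.
      lincomb_coeff (bracket_table (bargmann_index d) (bargmann_index e)) (bargmann_index f)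
        = ebb d e $ f"
    by (simp add: ebas_list_def lincomb_coeff_def ebb_def sum_UNIV_idx eev_def axis_def)
  then have coeffs: "lincomb_coeff ?L (bargmann_index f) = ebb d e $ f" for f
    by (simp add: set_ebas_list)
  have "\<forall>d\<in>set ebas_list. \<forall>e\<in>set ebas_list.
      fst ` set (bracket_table (bargmann_index d) (bargmann_index e))
        \<subseteq> bargmann_index ` set ebas_list"
    by (simp add: ebas_list_def)
  then have keys: "fst ` set ?L \<subseteq> range bargmann_index"
    by (simp add: set_ebas_list)
  show ?thesis
    unfolding vec_eq_iff bb_eq_bracket_table lincomb_component
  proof
    fix b
    show "lincomb_coeff ?L b = bargmann_incl (ebb d e) $ b"
    proof (cases "b \<in> range bargmann_index")
      case True
      then show ?thesis using coeffs by (auto simp: bargmann_incl_index)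
    next
      case False
      moreover from False keys have "b \<notin> fst ` set ?L" by blast
      ultimately show ?thesis by (simp add: lincomb_coeff_notin bargmann_incl_notin)
    qed
  qed
qed

lemma bargmann_incl_hom: "br (bargmann_incl u) (bargmann_incl w) = bargmann_incl (ebr u w)"
proof -
  have "(\<lambda>u w. br (bargmann_incl u) (bargmann_incl w)) = (\<lambda>u w. bargmann_incl (ebr u w))"
  proof (rule bilinear_eq_stdbasis)
    show "bilinear (\<lambda>u w. br (bargmann_incl u) (bargmann_incl w))"
      using bilinear_br linear_bargmann_incl unfolding bilinear_def linear_iff by simp
    show "bilinear (\<lambda>u w. bargmann_incl (ebr u w))"
      using bilinear_bilinear_extension[of ebb] linear_bargmann_incl
      unfolding ebr_eq_bilinear_extension bilinear_def linear_iff by simp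
    fix u w :: EB
    assume "u \<in> Basis" "w \<in> Basis"
    then obtain d e where "u = axis d 1" "w = axis e 1"
      by (auto simp: Basis_real_vec)
    then show "br (bargmann_incl u) (bargmann_incl w) = bargmann_incl (ebr u w)"
      by (simp add: bargmann_incl_axis br_ev bargmann_bracket_table ebr_eq_bilinear_extension
          bilinear_extension_axis)
  qed
  then show ?thesis by meson
qed

theorem mainTheorem10:
  shows "lie_algebra br \<and> invariant_metric br met
         \<and> lie_subalgebra br bargmann_sub \<and> lie_iso_sub br bargmann_sub ebr"
proof -
  have "lie_subalgebra br (range bargmann_incl)"
    by (rule lie_subalgebra_range[OF linear_bargmann_incl]) (rule bargmann_incl_hom)
  moreover have "lie_iso_sub br (range bargmann_incl) ebr"
    by (rule lie_iso_sub_range[OF linear_bargmann_incl inj_bargmann_incl]) (rule bargmann_incl_hom)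
  ultimately show ?thesis
    using lie_algebra_br invariant_metric_met by (simp add: range_bargmann_incl)
qed

end
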